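(* Let $(S_0,S_1,\dots)$ be a supermartingale relative to a nondecreasing sequence of $\sigma$-algebras $H_{\le 0}\subseteq H_{\le 1}\subseteq\cdots$, with $S_0\le 0$ a.s. and differences $X_i:=S_i-S_{i-1}$, $i=1,2,\dots$. Suppose that for every $i=1,2,\dots$ there exist non-random constants $d_i>0$ and $\sigma_i>0$ such that $X_i\le d_i$ and $\operatorname{Var}(X_i\mid H_{\le i-1})\le\sigma_i^2$ a.s. Then for all $n=1,2,\dots$, $$\mathbf{E}f(S_n)\le\mathbf{E}f(T_n)\quad\text{for all } f\in\mathcal{F}_+^{(2)},$$ where $T_n:=Z_1+\dots+Z_n$ and $Z_1,\dots,Z_n$ are independent random variables with $\mathbf{P}(Z_i=d_i)=\frac{\sigma_i^2}{d_i^2+\sigma_i^2}$ and $\mathbf{P}(Z_i=-\sigma_i^2/d_i)=\frac{d_i^2}{d_i^2+\sigma_i^2}$ (so that $\mathbf{E}Z_i=0$ and $\operatorname{Var}Z_i=\sigma_i^2$).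
   Context: $\mathcal{F}_+^{(2)}$ denotes the class of all functions $f:\mathbb{R}\to\mathbb{R}$ of the form $f(u)=\int_{-\infty}^{\infty}(u-t)_+^2\,\mu(dt)$ for all $u\in\mathbb{R}$, for some Borel measure $\mu\ge0$ on $\mathbb{R}$, where $x_+:=\max(0,x)$. *)

theory Defs
  imports "HOL-Probability.Probability"
begin

text \<open>The class F_+^(2): functions u |-> integral of ((u - t)_+)^2 w.r.t. a Borel measure mu >= 0
  (real valued, so the integral is finite for every u).\<close>
definition F2plus :: "(real \<Rightarrow> real) set" where
  "F2plus = {f. \<exists>\<mu> :: real measure. sets \<mu> = sets borel \<and>
      (\<forall>u. ennreal (f u) = (\<integral>\<^sup>+ t. ennreal ((max 0 (u - t))\<^sup>2) \<partial>\<mu>))}"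

definition filtration :: "'a measure \<Rightarrow> (nat \<Rightarrow> 'a measure) \<Rightarrow> bool" where
  "filtration M H \<longleftrightarrow> (\<forall>i. subalgebra M (H i)) \<and> (\<forall>i j. i \<le> j \<longrightarrow> sets (H i) \<subseteq> sets (H j))"

definition supermartingale :: "'a measure \<Rightarrow> (nat \<Rightarrow> 'a measure) \<Rightarrow> (nat \<Rightarrow> 'a \<Rightarrow> real) \<Rightarrow> bool" where
  "supermartingale M H S \<longleftrightarrow> filtration M H \<and>
     (\<forall>i. S i \<in> borel_measurable (H i) \<and> integrable M (S i) \<and>
          (AE \<omega> in M. real_cond_exp M (H i) (S (Suc i)) \<omega> \<le> S i \<omega>))"

definition cond_var :: "'a measure \<Rightarrow> 'a measure \<Rightarrow> ('a \<Rightarrow> real) \<Rightarrow> ('a \<Rightarrow> ennreal)" where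
  "cond_var M F X = nn_cond_exp M F (\<lambda>\<omega>. ennreal ((X \<omega> - real_cond_exp M F X \<omega>)\<^sup>2))"

end

theory Submission
  imports Defs
begin

text \<open>
  Fix a squared hinge \<open>h\<^sub>t(x) = (x - t)\<^sub>+\<^sup>2\<close>. Conditionally on \<open>H\<^sub>i\<^sub>-\<^sub>1\<close>, write
  \<open>S\<^sub>i - t = w + X\<close> with \<open>w = S\<^sub>i\<^sub>-\<^sub>1 - t\<close> known. On \<open>X \<le> d\<close> the function
  \<open>x \<mapsto> (w + x)\<^sub>+\<^sup>2\<close> is dominated by a parabola that agrees with it at the two atoms
  \<open>d\<close> and \<open>-\<sigma>\<^sup>2/d\<close> of \<open>Z\<^sub>i\<close> and has its vertex at a point \<open>\<le> 0\<close>. Since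
  \<open>E[X | H] \<le> 0\<close> and \<open>Var(X | H) \<le> \<sigma>\<^sup>2\<close>, the conditional expectation of the parabola is at
  most its average against the law of \<open>Z\<^sub>i\<close>, which is \<open>E (w + Z\<^sub>i)\<^sub>+\<^sup>2\<close>.
  Averaging against \<open>Z\<^sub>i\<close> maps nonnegative combinations of squared hinges to such
  combinations, so the step iterates from \<open>S\<^sub>n\<close> back to \<open>S\<^sub>0 \<le> 0\<close>; by independence the
  iterated average at \<open>0\<close> is \<open>E h\<^sub>t(T\<^sub>n)\<close>. Every \<open>f \<in> F\<^sub>+\<^sup>(\<^sup>2\<^sup>)\<close> is a mixture of
  squared hinges, and Tonelli's theorem integrates the hinge inequality over the mixing measure.
\<close>

text \<open>\<open>two_point_mean d v h y = E h(y + Z)\<close> for \<open>Z = d\<close> with probability \<open>v / (d\<^sup>2 + v)\<close>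
  and \<open>Z = -v/d\<close> otherwise, so that \<open>E Z = 0\<close> and \<open>Var Z = v\<close>.\<close>

definition two_point_mean :: "real \<Rightarrow> real \<Rightarrow> (real \<Rightarrow> real) \<Rightarrow> real \<Rightarrow> real" where
  "two_point_mean d v h y = v / (d\<^sup>2 + v) * h (y + d) + d\<^sup>2 / (d\<^sup>2 + v) * h (y - v / d)"

lemma two_point_mean_add_cmult:
  "two_point_mean d v (\<lambda>x. h x + a * g x) y = two_point_mean d v h y + a * two_point_mean d v g y"
  unfolding two_point_mean_def by (simp add: algebra_simps)

lemma two_point_mean_nonneg:
  "0 \<le> v \<Longrightarrow> (\<And>x. 0 \<le> h x) \<Longrightarrow> 0 \<le> two_point_mean d v h y"
  unfolding two_point_mean_def by (intro add_nonneg_nonneg mult_nonneg_nonneg) auto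

lemma two_point_mean_measurable[measurable]:
  assumes [measurable]: "h \<in> borel_measurable borel"
  shows "two_point_mean d v h \<in> borel_measurable borel"
  unfolding two_point_mean_def by measurable

text \<open>For fixed \<open>w\<close>, the parabola \<open>x \<mapsto> majorant_coeff d v w * (x - majorant_vertex d v w)\<^sup>2\<close>
  agrees with \<open>x \<mapsto> (w + x)\<^sub>+\<^sup>2\<close> at \<open>x = d\<close> and \<open>x = -v/d\<close>.\<close>

definition majorant_coeff :: "real \<Rightarrow> real \<Rightarrow> real \<Rightarrow> real" where
  "majorant_coeff d v w =
     (if w + d \<le> 0 then 0 else if v / d \<le> w then 1 else (w + d)\<^sup>2 / (d + v / d)\<^sup>2)"

definition majorant_vertex :: "real \<Rightarrow> real \<Rightarrow> real \<Rightarrow> real" where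
  "majorant_vertex d v w = (if w + d \<le> 0 then 0 else if v / d \<le> w then - w else - (v / d))"

lemma majorant_coeff_bounds:
  assumes "d > 0" "v > 0"
  shows "0 \<le> majorant_coeff d v w" "majorant_coeff d v w \<le> 1"
proof -
  show "0 \<le> majorant_coeff d v w" unfolding majorant_coeff_def by auto
  have "(w + d)\<^sup>2 \<le> (d + v / d)\<^sup>2" if "0 < w + d" "w < v / d"
    using that by (intro power_mono) auto
  then show "majorant_coeff d v w \<le> 1"
    using assms unfolding majorant_coeff_def by (auto simp: divide_le_eq_1)
qed

lemma majorant_vertex_bounds:
  assumes "d > 0" "v > 0"
  shows "majorant_vertex d v w \<le> 0" "\<bar>majorant_vertex d v w\<bar> \<le> \<bar>w\<bar> + v / d"
proof -
  have "0 < v / d" using assms by simp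
  then show "majorant_vertex d v w \<le> 0" "\<bar>majorant_vertex d v w\<bar> \<le> \<bar>w\<bar> + v / d"
    unfolding majorant_vertex_def by auto
qed

lemma majorant_coeff_measurable[measurable]: "majorant_coeff d v \<in> borel_measurable borel"
  unfolding majorant_coeff_def by measurable

lemma majorant_vertex_measurable[measurable]: "majorant_vertex d v \<in> borel_measurable borel"
  unfolding majorant_vertex_def by measurable

lemma majorant_two_point_mean:
  assumes "d > 0" "v > 0"
  shows "majorant_coeff d v w * (v + (majorant_vertex d v w)\<^sup>2)
       = two_point_mean d v (\<lambda>x. (max 0 x)\<^sup>2) w"
proof -
  have dv: "d\<^sup>2 + v > 0" using assms by (simp add: add_pos_pos)
  consider "w + d \<le> 0" | "0 < w + d" "v / d \<le> w" | "0 < w + d" "w < v / d" by linarith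
  then show ?thesis
  proof cases
    case 1
    then have "w - v / d \<le> 0" using assms divide_pos_pos[of v d] by linarith
    then show ?thesis
      using 1 unfolding majorant_coeff_def majorant_vertex_def two_point_mean_def by simp
  next
    case 2
    then have "two_point_mean d v (\<lambda>x. (max 0 x)\<^sup>2) w
             = v / (d\<^sup>2 + v) * (w + d)\<^sup>2 + d\<^sup>2 / (d\<^sup>2 + v) * (w - v / d)\<^sup>2"
      using assms unfolding two_point_mean_def by (simp add: max_def)
    also have "\<dots> = (v * (w + d)\<^sup>2 + d\<^sup>2 * (w - v / d)\<^sup>2) / (d\<^sup>2 + v)"
      by (simp add: add_divide_distrib)
    also have "d\<^sup>2 * (w - v / d)\<^sup>2 = (d * w - v)\<^sup>2"
      using assms by (simp flip: power_mult_distrib add: right_diff_distrib)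
    also have "v * (w + d)\<^sup>2 + (d * w - v)\<^sup>2 = (v + w\<^sup>2) * (d\<^sup>2 + v)"
      by (simp add: power2_eq_square algebra_simps)
    also have "(v + w\<^sup>2) * (d\<^sup>2 + v) / (d\<^sup>2 + v) = v + w\<^sup>2"
      using dv by simp
    finally show ?thesis
      using 2 unfolding majorant_coeff_def majorant_vertex_def by simp
  next
    case 3
    then have "two_point_mean d v (\<lambda>x. (max 0 x)\<^sup>2) w = v / (d\<^sup>2 + v) * (w + d)\<^sup>2"
      unfolding two_point_mean_def by (simp add: max_def)
    also have "v / (d\<^sup>2 + v) = (v + (v / d)\<^sup>2) / (d + v / d)\<^sup>2"
    proof -
      have "(d + v / d)\<^sup>2 = (d\<^sup>2 + v)\<^sup>2 / d\<^sup>2" "v + (v / d)\<^sup>2 = v * (d\<^sup>2 + v) / d\<^sup>2"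
        using assms by (simp_all add: field_simps power2_eq_square)
      then show ?thesis using assms dv by (simp add: power2_eq_square)
    qed
    finally show ?thesis
      using 3 unfolding majorant_coeff_def majorant_vertex_def by simp
  qed
qed

lemma sq_hinge_le_majorant:
  assumes "d > 0" "v > 0" "x \<le> d" "c \<le> majorant_vertex d v w"
  shows "(max 0 (w + x))\<^sup>2 \<le> majorant_coeff d v w * (x - c)\<^sup>2"
proof (cases "w + x \<le> 0")
  case True
  then show ?thesis using assms majorant_coeff_bounds[OF assms(1,2)] by (simp add: max_def)
next
  case False
  consider "v / d \<le> w" | "w < v / d" by linarith
  then show ?thesis
  proof cases
    case 1
    then have "majorant_coeff d v w = 1" "c \<le> - w"
      using False assms unfolding majorant_coeff_def majorant_vertex_def by auto
    moreover have "(w + x)\<^sup>2 \<le> (x - c)\<^sup>2"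
      using False \<open>c \<le> - w\<close> by (intro power_mono) auto
    ultimately show ?thesis using False by simp
  next
    case 2
    let ?c = "v / d"
    have wd: "0 < w + d" "c \<le> - ?c" and dc: "0 < d + ?c"
      using False 2 assms unfolding majorant_vertex_def by (auto simp: add_pos_pos)
    have "(w + x) * (d + ?c) \<le> (w + d) * (x - c)"
    proof -
      have "(w + d) * (x + ?c) - (w + x) * (d + ?c) = (d - x) * (?c - w)"
        by algebra
      moreover have "(d - x) * (?c - w) \<ge> 0" using assms 2 by simp
      moreover have "(w + d) * (x + ?c) \<le> (w + d) * (x - c)"
        using wd by (intro mult_left_mono) auto
      ultimately show ?thesis by linarith
    qed
    then have "w + x \<le> (w + d) / (d + ?c) * (x - c)"
      using dc by (simp add: field_simps)
    then have "(w + x)\<^sup>2 \<le> ((w + d) / (d + ?c) * (x - c))\<^sup>2"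
      using False by (intro power_mono) auto
    then show ?thesis
      using wd 2 False unfolding majorant_coeff_def by (simp add: power_mult_distrib power_divide)
  qed
qed

text \<open>The centre \<open>min m x0\<close> of the majorant is written as \<open>m - max 0 (min m 0 - x0)\<close>, valid
  for \<open>m \<le> 0\<close>, with a shift that is bounded by \<open>-x0\<close> for every \<open>m\<close>.\<close>

lemma sq_hinge_le_shifted_majorant:
  assumes "d > 0" "v > 0" "x \<le> d" "m \<le> 0"
  shows "(max 0 (w + x))\<^sup>2
       \<le> majorant_coeff d v w * (x - m + max 0 (min m 0 - majorant_vertex d v w))\<^sup>2"
proof -
  have "x - m + max 0 (min m 0 - majorant_vertex d v w) = x - min m (majorant_vertex d v w)"
    using assms(4) by auto
  then show ?thesis
    by (metis sq_hinge_le_majorant[OF assms(1-3)] min.cobounded2)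
qed

lemma shifted_majorant_le_two_point_mean:
  assumes "d > 0" "v > 0"
  shows "majorant_coeff d v w * v + majorant_coeff d v w * (max 0 (min m 0 - majorant_vertex d v w))\<^sup>2
       \<le> two_point_mean d v (\<lambda>x. (max 0 x)\<^sup>2) w"
proof -
  have "max 0 (min m 0 - majorant_vertex d v w) \<le> - majorant_vertex d v w"
    using majorant_vertex_bounds(1)[OF assms, of w] by auto
  then have "(max 0 (min m 0 - majorant_vertex d v w))\<^sup>2 \<le> (- majorant_vertex d v w)\<^sup>2"
    by (intro power_mono) auto
  then have "(max 0 (min m 0 - majorant_vertex d v w))\<^sup>2 \<le> (majorant_vertex d v w)\<^sup>2"
    by simp
  then show ?thesis
    using majorant_coeff_bounds(1)[OF assms, of w]
    unfolding majorant_two_point_mean[OF assms, symmetric] distrib_left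
    by (intro add_left_mono mult_left_mono)
qed

inductive_set sq_hinge_cone :: "(real \<Rightarrow> real) set" where
  zero: "(\<lambda>_. 0) \<in> sq_hinge_cone"
| add: "h \<in> sq_hinge_cone \<Longrightarrow> 0 \<le> a \<Longrightarrow> (\<lambda>x. h x + a * (max 0 (x - r))\<^sup>2) \<in> sq_hinge_cone"

lemma sq_hinge_in_cone: "(\<lambda>x. (max 0 (x - r))\<^sup>2) \<in> sq_hinge_cone"
  using sq_hinge_cone.add[OF sq_hinge_cone.zero, of 1 r] by simp

lemma sq_hinge_cone_nonneg: "h \<in> sq_hinge_cone \<Longrightarrow> 0 \<le> h x"
  by (induction rule: sq_hinge_cone.induct) auto

lemma sq_hinge_cone_mono: "h \<in> sq_hinge_cone \<Longrightarrow> x \<le> y \<Longrightarrow> h x \<le> h y"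
proof (induction rule: sq_hinge_cone.induct)
  case (add h a r)
  have "(max 0 (x - r))\<^sup>2 \<le> (max 0 (y - r))\<^sup>2"
    using add.prems by (intro power_mono) auto
  then show ?case using add by (simp add: add_mono mult_left_mono)
qed simp

lemma sq_hinge_cone_measurable: "h \<in> sq_hinge_cone \<Longrightarrow> h \<in> borel_measurable borel"
proof (induction rule: sq_hinge_cone.induct)
  case (add h a r)
  note [measurable] = add.IH
  show ?case by measurable
qed simp

lemma two_point_mean_sq_hinge_cone:
  assumes "h \<in> sq_hinge_cone" "0 \<le> v"
  shows "two_point_mean d v h \<in> sq_hinge_cone"
  using assms(1)
proof (induction rule: sq_hinge_cone.induct)
  case zero
  then show ?case by (simp add: two_point_mean_def sq_hinge_cone.zero)
next
  case (add h a r)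
  let ?p = "v / (d\<^sup>2 + v)" and ?q = "d\<^sup>2 / (d\<^sup>2 + v)"
  have eq: "two_point_mean d v (\<lambda>x. h x + a * (max 0 (x - r))\<^sup>2)
      = (\<lambda>y. two_point_mean d v h y + ?p * a * (max 0 (y - (r - d)))\<^sup>2
                                     + ?q * a * (max 0 (y - (r + v / d)))\<^sup>2)"
    unfolding two_point_mean_add_cmult by (auto simp: two_point_mean_def algebra_simps)
  have "0 \<le> ?p * a" "0 \<le> ?q * a" using add.hyps assms(2) by simp_all
  from sq_hinge_cone.add[OF sq_hinge_cone.add[OF add.IH this(1)] this(2)]
  show ?case unfolding eq .
qed

lemma integrable_bounded_mult:
  fixes f g :: "'a \<Rightarrow> real"
  assumes "integrable M f" "g \<in> borel_measurable M" "\<And>x. \<bar>g x\<bar> \<le> C"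
  shows "integrable M (\<lambda>x. g x * f x)"
proof (rule Bochner_Integration.integrable_bound[where f = "\<lambda>x. C * f x"])
  have "\<bar>g x\<bar> * \<bar>f x\<bar> \<le> \<bar>C\<bar> * \<bar>f x\<bar>" for x
    using assms(3)[of x] by (intro mult_right_mono) auto
  then show "AE x in M. norm (g x * f x) \<le> norm (C * f x)"
    by (simp add: abs_mult)
qed (use assms in auto)

lemma nn_integral_ennreal_add_cmult:
  fixes f g :: "'a \<Rightarrow> real"
  assumes "f \<in> borel_measurable M" "g \<in> borel_measurable M" "\<And>x. 0 \<le> f x" "\<And>x. 0 \<le> g x" "0 \<le> a"
  shows "(\<integral>\<^sup>+x. f x + a * g x \<partial>M) = (\<integral>\<^sup>+x. f x \<partial>M) + a * (\<integral>\<^sup>+x. g x \<partial>M)"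
  using assms by (simp add: ennreal_plus ennreal_mult nn_integral_add nn_integral_cmult)

lemma (in prob_space) sigma_finite_subalgebra_if_subalgebra:
  "subalgebra M F \<Longrightarrow> sigma_finite_subalgebra M F"
  by (intro finite_measure_subalgebra_is_sigma_finite)
     (simp add: finite_measure_subalgebra_def finite_measure_subalgebra_axioms_def finite_measure_axioms)

lemma (in sigma_finite_subalgebra) nn_integral_mult_sq_residual_le:
  assumes "X \<in> borel_measurable M" "AE \<omega> in M. cond_var M F X \<omega> \<le> ennreal v"
    and "\<psi> \<in> borel_measurable F"
  shows "(\<integral>\<^sup>+\<omega>. \<psi> \<omega> * ennreal ((X \<omega> - real_cond_exp M F X \<omega>)\<^sup>2) \<partial>M) \<le> (\<integral>\<^sup>+\<omega>. \<psi> \<omega> * v \<partial>M)"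
proof -
  have "(\<integral>\<^sup>+\<omega>. \<psi> \<omega> * ennreal ((X \<omega> - real_cond_exp M F X \<omega>)\<^sup>2) \<partial>M)
      = (\<integral>\<^sup>+\<omega>. \<psi> \<omega> * cond_var M F X \<omega> \<partial>M)"
    unfolding cond_var_def using assms(1,3) by (intro nn_cond_exp_intg[symmetric]) auto
  also have "\<dots> \<le> (\<integral>\<^sup>+\<omega>. \<psi> \<omega> * v \<partial>M)"
    using assms(2) by (intro nn_integral_mono_AE) (auto elim!: eventually_mono intro: mult_left_mono)
  finally show ?thesis .
qed

lemma (in sigma_finite_subalgebra) integral_mult_residual_eq_0:
  assumes "integrable M X" "g \<in> borel_measurable F" "integrable M (\<lambda>\<omega>. g \<omega> * X \<omega>)"
  shows "(\<integral>\<omega>. g \<omega> * (X \<omega> - real_cond_exp M F X \<omega>) \<partial>M) = 0"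
  using real_cond_exp_intg[OF assms(3) assms(2)] assms(1,3) by (simp add: right_diff_distrib)

lemma nn_integral_weighted_sq_add_orthogonal:
  fixes \<phi> R D :: "'a \<Rightarrow> real"
  assumes i1: "integrable M (\<lambda>\<omega>. \<phi> \<omega> * (R \<omega>)\<^sup>2)" and i2: "integrable M (\<lambda>\<omega>. \<phi> \<omega> * (D \<omega>)\<^sup>2)"
    and i3: "integrable M (\<lambda>\<omega>. (\<phi> \<omega> * D \<omega>) * R \<omega>)" and cross: "(\<integral>\<omega>. (\<phi> \<omega> * D \<omega>) * R \<omega> \<partial>M) = 0"
    and "\<And>\<omega>. 0 \<le> \<phi> \<omega>"
  shows "(\<integral>\<^sup>+\<omega>. \<phi> \<omega> * (R \<omega> + D \<omega>)\<^sup>2 \<partial>M)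
       = (\<integral>\<^sup>+\<omega>. \<phi> \<omega> * (R \<omega>)\<^sup>2 \<partial>M) + (\<integral>\<^sup>+\<omega>. \<phi> \<omega> * (D \<omega>)\<^sup>2 \<partial>M)"
proof -
  have expand: "(\<lambda>\<omega>. \<phi> \<omega> * (R \<omega> + D \<omega>)\<^sup>2)
      = (\<lambda>\<omega>. (\<phi> \<omega> * (R \<omega>)\<^sup>2 + \<phi> \<omega> * (D \<omega>)\<^sup>2) + 2 * ((\<phi> \<omega> * D \<omega>) * R \<omega>))"
    by (simp add: fun_eq_iff power2_eq_square algebra_simps)
  have i12: "integrable M (\<lambda>\<omega>. \<phi> \<omega> * (R \<omega>)\<^sup>2 + \<phi> \<omega> * (D \<omega>)\<^sup>2)"
    using i1 i2 by (rule Bochner_Integration.integrable_add)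
  have "(\<integral>\<omega>. \<phi> \<omega> * (R \<omega> + D \<omega>)\<^sup>2 \<partial>M) = (\<integral>\<omega>. \<phi> \<omega> * (R \<omega>)\<^sup>2 \<partial>M) + (\<integral>\<omega>. \<phi> \<omega> * (D \<omega>)\<^sup>2 \<partial>M)"
    unfolding expand
    using Bochner_Integration.integral_add[OF i12 integrable_mult_right[where c = 2, OF i3]]
      Bochner_Integration.integral_add[OF i1 i2] cross by simp
  moreover have "integrable M (\<lambda>\<omega>. \<phi> \<omega> * (R \<omega> + D \<omega>)\<^sup>2)"
    unfolding expand by (rule Bochner_Integration.integrable_add[OF i12 integrable_mult_right[OF i3]])
  ultimately show ?thesis
    using i1 i2 \<open>\<And>\<omega>. 0 \<le> \<phi> \<omega>\<close> by (simp add: nn_integral_eq_integral integral_nonneg ennreal_plus)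
qed

lemma nn_integral_cond_var_shift_le:
  fixes X \<phi> D :: "'a \<Rightarrow> real"
  assumes "prob_space M" "subalgebra M F"
    and [measurable]: "X \<in> borel_measurable M" and X: "integrable M X"
    and var: "AE \<omega> in M. cond_var M F X \<omega> \<le> ennreal v" and "0 \<le> v"
    and [measurable]: "\<phi> \<in> borel_measurable F" "D \<in> borel_measurable F"
    and \<phi>: "\<And>\<omega>. 0 \<le> \<phi> \<omega>" "\<And>\<omega>. \<phi> \<omega> \<le> C" and D: "\<And>\<omega>. \<bar>D \<omega>\<bar> \<le> C"
  shows "(\<integral>\<^sup>+\<omega>. \<phi> \<omega> * (X \<omega> - real_cond_exp M F X \<omega> + D \<omega>)\<^sup>2 \<partial>M)
       \<le> (\<integral>\<^sup>+\<omega>. \<phi> \<omega> * v + \<phi> \<omega> * (D \<omega>)\<^sup>2 \<partial>M)"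
proof -
  interpret prob_space M by fact
  interpret sigma_finite_subalgebra M F
    using assms(2) by (rule sigma_finite_subalgebra_if_subalgebra)
  define R where "R \<omega> = X \<omega> - real_cond_exp M F X \<omega>" for \<omega>
  have [measurable]: "R \<in> borel_measurable M" "\<phi> \<in> borel_measurable M" "D \<in> borel_measurable M"
    unfolding R_def using subalg by (auto intro: measurable_from_subalg)
  have weighted_var: "(\<integral>\<^sup>+\<omega>. \<psi> \<omega> * (R \<omega>)\<^sup>2 \<partial>M) \<le> (\<integral>\<^sup>+\<omega>. \<psi> \<omega> * v \<partial>M)"
    if "\<psi> \<in> borel_measurable F" for \<psi> :: "'a \<Rightarrow> ennreal"
    unfolding R_def using nn_integral_mult_sq_residual_le[OF assms(3) var that] by simp
  have "(\<integral>\<^sup>+\<omega>. (R \<omega>)\<^sup>2 \<partial>M) < \<infinity>"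
    using weighted_var[of "\<lambda>_. 1"] by (simp add: emeasure_space_1 le_less_trans)
  then have sq: "integrable M (\<lambda>\<omega>. (R \<omega>)\<^sup>2)"
    by (intro integrableI_nonneg) auto
  have \<phi>D: "\<bar>\<phi> \<omega> * D \<omega>\<bar> \<le> C * C" for \<omega>
    using \<phi>[of \<omega>] D[of \<omega>] by (auto simp: abs_mult intro: mult_mono)
  have "integrable M (\<lambda>\<omega>. (\<phi> \<omega> * D \<omega>) * D \<omega>)"
    using \<phi>D D by (intro integrable_bounded_mult integrable_const_bound[where B = C]) auto
  moreover have "integrable M (\<lambda>\<omega>. (\<phi> \<omega> * D \<omega>) * R \<omega>)"
    unfolding R_def using X \<phi>D by (intro integrable_bounded_mult) auto
  moreover have "(\<integral>\<omega>. (\<phi> \<omega> * D \<omega>) * R \<omega> \<partial>M) = 0"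
    unfolding R_def using \<phi>D
    by (intro integral_mult_residual_eq_0 X integrable_bounded_mult[OF X]) auto
  ultimately have "(\<integral>\<^sup>+\<omega>. \<phi> \<omega> * (R \<omega> + D \<omega>)\<^sup>2 \<partial>M)
      = (\<integral>\<^sup>+\<omega>. \<phi> \<omega> * (R \<omega>)\<^sup>2 \<partial>M) + (\<integral>\<^sup>+\<omega>. \<phi> \<omega> * (D \<omega>)\<^sup>2 \<partial>M)"
    using \<phi> by (intro nn_integral_weighted_sq_add_orthogonal integrable_bounded_mult[OF sq])
      (auto simp: power2_eq_square mult.assoc)
  also have "\<dots> \<le> (\<integral>\<^sup>+\<omega>. \<phi> \<omega> * v \<partial>M) + (\<integral>\<^sup>+\<omega>. \<phi> \<omega> * (D \<omega>)\<^sup>2 \<partial>M)"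
    using weighted_var[of "\<lambda>\<omega>. ennreal (\<phi> \<omega>)"] \<phi> \<open>0 \<le> v\<close> by (simp add: ennreal_mult add_mono)
  also have "\<dots> = (\<integral>\<^sup>+\<omega>. \<phi> \<omega> * v + \<phi> \<omega> * (D \<omega>)\<^sup>2 \<partial>M)"
    using \<phi> \<open>0 \<le> v\<close> by (simp add: nn_integral_add ennreal_plus)
  finally show ?thesis unfolding R_def .
qed

lemma sq_hinge_step_on_bounded_set:
  fixes X Y :: "'a \<Rightarrow> real"
  assumes "prob_space M" "subalgebra M F"
    and [measurable]: "Y \<in> borel_measurable F" "X \<in> borel_measurable M" and "integrable M X"
    and X_le: "AE \<omega> in M. X \<omega> \<le> d" and drift: "AE \<omega> in M. real_cond_exp M F X \<omega> \<le> 0"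
    and var: "AE \<omega> in M. cond_var M F X \<omega> \<le> ennreal v" and "0 < d" "0 < v"
    and [measurable]: "A \<in> sets F" and bounded: "\<And>\<omega>. \<omega> \<in> A \<Longrightarrow> \<bar>Y \<omega>\<bar> \<le> K"
  shows "(\<integral>\<^sup>+\<omega>. indicator A \<omega> * (max 0 (Y \<omega> + X \<omega>))\<^sup>2 \<partial>M)
       \<le> (\<integral>\<^sup>+\<omega>. indicator A \<omega> * two_point_mean d v (\<lambda>x. (max 0 x)\<^sup>2) (Y \<omega>) \<partial>M)"
proof -
  define m where "m = real_cond_exp M F X"
  define \<phi> where "\<phi> \<omega> = indicator A \<omega> * majorant_coeff d v (Y \<omega>)" for \<omega>
  define D where "D \<omega> = indicator A \<omega> * max 0 (min (m \<omega>) 0 - majorant_vertex d v (Y \<omega>))" for \<omega>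
  have [measurable]: "\<phi> \<in> borel_measurable F" "D \<in> borel_measurable F"
    unfolding \<phi>_def D_def m_def by measurable
  have \<phi>: "0 \<le> \<phi> \<omega>" "\<phi> \<omega> \<le> max 1 (K + v / d)" for \<omega>
    unfolding \<phi>_def using majorant_coeff_bounds[OF \<open>0 < d\<close> \<open>0 < v\<close>, of "Y \<omega>"]
    by (auto simp: indicator_def)
  have "\<bar>D \<omega>\<bar> \<le> max 1 (K + v / d)" for \<omega>
    unfolding D_def using majorant_vertex_bounds[OF \<open>0 < d\<close> \<open>0 < v\<close>, of "Y \<omega>"] bounded[of \<omega>]
    by (cases "\<omega> \<in> A") auto
  note shift_le = nn_integral_cond_var_shift_le[OF assms(1,2,4,5) var _ _ _ \<phi> this]
  have "AE \<omega> in M. indicator A \<omega> * (max 0 (Y \<omega> + X \<omega>))\<^sup>2 \<le> \<phi> \<omega> * (X \<omega> - m \<omega> + D \<omega>)\<^sup>2"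
    using X_le drift
  proof eventually_elim
    case (elim \<omega>)
    show ?case
      using sq_hinge_le_shifted_majorant[OF \<open>0 < d\<close> \<open>0 < v\<close> elim, of "Y \<omega>"]
      unfolding \<phi>_def D_def m_def by (cases "\<omega> \<in> A") simp_all
  qed
  then have "(\<integral>\<^sup>+\<omega>. indicator A \<omega> * (max 0 (Y \<omega> + X \<omega>))\<^sup>2 \<partial>M)
      \<le> (\<integral>\<^sup>+\<omega>. \<phi> \<omega> * (X \<omega> - m \<omega> + D \<omega>)\<^sup>2 \<partial>M)"
    by (intro nn_integral_mono_AE) (auto elim!: eventually_mono intro: ennreal_leI)
  also have "\<dots> \<le> (\<integral>\<^sup>+\<omega>. \<phi> \<omega> * v + \<phi> \<omega> * (D \<omega>)\<^sup>2 \<partial>M)"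
    unfolding m_def using \<open>0 < v\<close> by (intro shift_le) auto
  also have "\<dots> \<le> (\<integral>\<^sup>+\<omega>. indicator A \<omega> * two_point_mean d v (\<lambda>x. (max 0 x)\<^sup>2) (Y \<omega>) \<partial>M)"
    unfolding \<phi>_def D_def
    by (intro nn_integral_mono ennreal_leI)
      (simp add: indicator_def shifted_majorant_le_two_point_mean \<open>0 < d\<close> \<open>0 < v\<close>)
  finally show ?thesis .
qed

lemma nn_integral_le_if_truncations_le:
  fixes Y :: "'a \<Rightarrow> real" and G :: "'a \<Rightarrow> ennreal"
  assumes [measurable]: "Y \<in> borel_measurable M" "G \<in> borel_measurable M"
    and truncated: "\<And>K::nat. (\<integral>\<^sup>+\<omega>. indicator {\<omega> \<in> space M. \<bar>Y \<omega>\<bar> \<le> K} \<omega> * G \<omega> \<partial>M) \<le> B"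
  shows "(\<integral>\<^sup>+\<omega>. G \<omega> \<partial>M) \<le> B"
proof -
  define A where "A K = {\<omega> \<in> space M. \<bar>Y \<omega>\<bar> \<le> real K}" for K
  have inc: "incseq (\<lambda>K \<omega>. indicator (A K) \<omega> * G \<omega>)"
    by (intro incseq_SucI le_funI mult_right_mono) (auto simp: A_def indicator_def)
  have sup: "(SUP K. indicator (A K) \<omega> * G \<omega>) = G \<omega>" if "\<omega> \<in> space M" for \<omega>
  proof (rule antisym)
    show "(SUP K. indicator (A K) \<omega> * G \<omega>) \<le> G \<omega>"
      by (intro SUP_least) (auto simp: indicator_def)
    have "\<omega> \<in> A (nat \<lceil>\<bar>Y \<omega>\<bar>\<rceil>)"
      using that real_nat_ceiling_ge unfolding A_def by blast
    then show "G \<omega> \<le> (SUP K. indicator (A K) \<omega> * G \<omega>)"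
      by (intro SUP_upper2[of "nat \<lceil>\<bar>Y \<omega>\<bar>\<rceil>"]) auto
  qed
  have "(\<integral>\<^sup>+\<omega>. G \<omega> \<partial>M) = (\<integral>\<^sup>+\<omega>. (SUP K. indicator (A K) \<omega> * G \<omega>) \<partial>M)"
    by (rule nn_integral_cong) (simp add: sup)
  also have "\<dots> = (SUP K. \<integral>\<^sup>+\<omega>. indicator (A K) \<omega> * G \<omega> \<partial>M)"
    by (rule nn_integral_monotone_convergence_SUP[OF inc]) (simp add: A_def)
  also have "\<dots> \<le> B"
    using truncated unfolding A_def by (intro SUP_least) auto
  finally show ?thesis .
qed

lemma sq_hinge_step:
  fixes X Y :: "'a \<Rightarrow> real"
  assumes "prob_space M" "subalgebra M F"
    and Y[measurable]: "Y \<in> borel_measurable F" and [measurable]: "X \<in> borel_measurable M"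
    and "integrable M X"
    and "AE \<omega> in M. X \<omega> \<le> d" "AE \<omega> in M. real_cond_exp M F X \<omega> \<le> 0"
    and "AE \<omega> in M. cond_var M F X \<omega> \<le> ennreal v" and "0 < d" "0 < v"
  shows "(\<integral>\<^sup>+\<omega>. (max 0 (Y \<omega> + X \<omega>))\<^sup>2 \<partial>M)
       \<le> (\<integral>\<^sup>+\<omega>. two_point_mean d v (\<lambda>x. (max 0 x)\<^sup>2) (Y \<omega>) \<partial>M)"
proof -
  have [measurable]: "Y \<in> borel_measurable M"
    using measurable_from_subalg[OF \<open>subalgebra M F\<close> Y] .
  \<comment> \<open>\<open>Y\<close> need not be square integrable, so the cross terms are only controlled where \<open>Y\<close> is bounded.\<close>
  show ?thesis
  proof (rule nn_integral_le_if_truncations_le)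
    fix K :: nat
    let ?A = "{\<omega> \<in> space M. \<bar>Y \<omega>\<bar> \<le> K}"
    have "?A = {\<omega> \<in> space F. \<bar>Y \<omega>\<bar> \<le> K}"
      using \<open>subalgebra M F\<close> by (simp add: subalgebra_def)
    also have "\<dots> \<in> sets F" by measurable
    finally have "?A \<in> sets F" .
    have "(\<integral>\<^sup>+\<omega>. indicator ?A \<omega> * (max 0 (Y \<omega> + X \<omega>))\<^sup>2 \<partial>M)
        \<le> (\<integral>\<^sup>+\<omega>. indicator ?A \<omega> * two_point_mean d v (\<lambda>x. (max 0 x)\<^sup>2) (Y \<omega>) \<partial>M)"
      by (rule sq_hinge_step_on_bounded_set[OF assms \<open>?A \<in> sets F\<close>, where K = "real K"]) auto
    also have "\<dots> \<le> (\<integral>\<^sup>+\<omega>. two_point_mean d v (\<lambda>x. (max 0 x)\<^sup>2) (Y \<omega>) \<partial>M)"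
    proof (intro nn_integral_mono ennreal_leI)
      fix \<omega>
      have "0 \<le> two_point_mean d v (\<lambda>x. (max 0 x)\<^sup>2) (Y \<omega>)"
        using \<open>0 < v\<close> by (intro two_point_mean_nonneg) auto
      then show "indicator ?A \<omega> * two_point_mean d v (\<lambda>x. (max 0 x)\<^sup>2) (Y \<omega>)
          \<le> two_point_mean d v (\<lambda>x. (max 0 x)\<^sup>2) (Y \<omega>)"
        by (simp add: indicator_def)
    qed
    finally show "(\<integral>\<^sup>+\<omega>. indicator ?A \<omega> * ennreal ((max 0 (Y \<omega> + X \<omega>))\<^sup>2) \<partial>M)
        \<le> (\<integral>\<^sup>+\<omega>. two_point_mean d v (\<lambda>x. (max 0 x)\<^sup>2) (Y \<omega>) \<partial>M)"
      by (simp add: indicator_mult_ennreal)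
  qed measurable
qed

lemma sq_hinge_cone_step:
  fixes X Y :: "'a \<Rightarrow> real"
  assumes "prob_space M" "subalgebra M F"
    and Y[measurable]: "Y \<in> borel_measurable F" and [measurable]: "X \<in> borel_measurable M"
    and "integrable M X"
    and "AE \<omega> in M. X \<omega> \<le> d" "AE \<omega> in M. real_cond_exp M F X \<omega> \<le> 0"
    and "AE \<omega> in M. cond_var M F X \<omega> \<le> ennreal v" and "0 < d" "0 < v"
    and "h \<in> sq_hinge_cone"
  shows "(\<integral>\<^sup>+\<omega>. h (Y \<omega> + X \<omega>) \<partial>M) \<le> (\<integral>\<^sup>+\<omega>. two_point_mean d v h (Y \<omega>) \<partial>M)"
  using \<open>h \<in> sq_hinge_cone\<close>
proof (induction rule: sq_hinge_cone.induct)
  case zero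
  then show ?case by (simp add: two_point_mean_def)
next
  case (add h a r)
  have [measurable]: "Y \<in> borel_measurable M" "h \<in> borel_measurable borel"
    using measurable_from_subalg[OF \<open>subalgebra M F\<close> Y] sq_hinge_cone_measurable[OF add.hyps(1)] .
  have "(\<integral>\<^sup>+\<omega>. (max 0 ((Y \<omega> - r) + X \<omega>))\<^sup>2 \<partial>M)
      \<le> (\<integral>\<^sup>+\<omega>. two_point_mean d v (\<lambda>x. (max 0 x)\<^sup>2) (Y \<omega> - r) \<partial>M)"
    by (rule sq_hinge_step[OF assms(1,2) _ assms(4-10)]) measurable
  then have hinge: "(\<integral>\<^sup>+\<omega>. (max 0 (Y \<omega> + X \<omega> - r))\<^sup>2 \<partial>M)
      \<le> (\<integral>\<^sup>+\<omega>. two_point_mean d v (\<lambda>x. (max 0 (x - r))\<^sup>2) (Y \<omega>) \<partial>M)"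
    by (simp add: two_point_mean_def algebra_simps)
  have "(\<integral>\<^sup>+\<omega>. h (Y \<omega> + X \<omega>) + a * (max 0 (Y \<omega> + X \<omega> - r))\<^sup>2 \<partial>M)
      = (\<integral>\<^sup>+\<omega>. h (Y \<omega> + X \<omega>) \<partial>M) + a * (\<integral>\<^sup>+\<omega>. (max 0 (Y \<omega> + X \<omega> - r))\<^sup>2 \<partial>M)"
    using add.hyps by (intro nn_integral_ennreal_add_cmult) (auto intro: sq_hinge_cone_nonneg)
  also have "\<dots> \<le> (\<integral>\<^sup>+\<omega>. two_point_mean d v h (Y \<omega>) \<partial>M)
      + a * (\<integral>\<^sup>+\<omega>. two_point_mean d v (\<lambda>x. (max 0 (x - r))\<^sup>2) (Y \<omega>) \<partial>M)"
    using add.IH hinge by (intro add_mono mult_left_mono) auto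
  also have "\<dots> = (\<integral>\<^sup>+\<omega>. two_point_mean d v (\<lambda>x. h x + a * (max 0 (x - r))\<^sup>2) (Y \<omega>) \<partial>M)"
    unfolding two_point_mean_add_cmult using add.hyps \<open>0 < v\<close>
    by (intro nn_integral_ennreal_add_cmult[symmetric] two_point_mean_nonneg)
      (auto intro: sq_hinge_cone_nonneg)
  finally show ?case .
qed

lemma supermartingale_measurable:
  "supermartingale M H S \<Longrightarrow> S i \<in> borel_measurable M"
  unfolding supermartingale_def filtration_def by (blast intro: measurable_from_subalg)

lemma supermartingale_cond_exp_increment_nonpos:
  assumes "prob_space M" "supermartingale M H S"
  shows "AE \<omega> in M. real_cond_exp M (H i) (\<lambda>\<omega>. S (Suc i) \<omega> - S i \<omega>) \<omega> \<le> 0"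
proof -
  interpret prob_space M by fact
  have sub: "subalgebra M (H i)" and [measurable]: "S i \<in> borel_measurable (H i)"
    and int: "integrable M (S i)" "integrable M (S (Suc i))"
    and super: "AE \<omega> in M. real_cond_exp M (H i) (S (Suc i)) \<omega> \<le> S i \<omega>"
    using assms(2) unfolding supermartingale_def filtration_def by auto
  interpret sigma_finite_subalgebra M "H i"
    using sub by (rule sigma_finite_subalgebra_if_subalgebra)
  have "AE \<omega> in M. real_cond_exp M (H i) (\<lambda>\<omega>. S (Suc i) \<omega> - S i \<omega>) \<omega>
      = real_cond_exp M (H i) (S (Suc i)) \<omega> - real_cond_exp M (H i) (S i) \<omega>"
    using int(2,1) by (rule real_cond_exp_diff)
  moreover have "AE \<omega> in M. real_cond_exp M (H i) (S i) \<omega> = S i \<omega>"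
    using int by (intro real_cond_exp_F_meas) auto
  ultimately show ?thesis
    using super by eventually_elim auto
qed

fun two_point_mean_iter :: "(nat \<Rightarrow> real) \<Rightarrow> (nat \<Rightarrow> real) \<Rightarrow> nat \<Rightarrow> (real \<Rightarrow> real) \<Rightarrow> real \<Rightarrow> real" where
  "two_point_mean_iter d v 0 h = h"
| "two_point_mean_iter d v (Suc k) h = two_point_mean_iter d v k (two_point_mean (d (Suc k)) (v (Suc k)) h)"

lemma supermartingale_sq_hinge_cone_le:
  fixes S :: "nat \<Rightarrow> 'a \<Rightarrow> real" and d v :: "nat \<Rightarrow> real"
  assumes "prob_space M" and super: "supermartingale M H S" and start: "AE \<omega> in M. S 0 \<omega> \<le> 0"
    and pos: "\<And>i. i \<ge> 1 \<Longrightarrow> d i > 0 \<and> v i > 0"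
    and incr_le: "\<And>i. i \<ge> 1 \<Longrightarrow> AE \<omega> in M. S i \<omega> - S (i - 1) \<omega> \<le> d i"
    and incr_var: "\<And>i. i \<ge> 1 \<Longrightarrow> AE \<omega> in M.
            cond_var M (H (i - 1)) (\<lambda>\<omega>. S i \<omega> - S (i - 1) \<omega>) \<omega> \<le> ennreal (v i)"
    and "h \<in> sq_hinge_cone"
  shows "(\<integral>\<^sup>+\<omega>. h (S k \<omega>) \<partial>M) \<le> two_point_mean_iter d v k h 0"
  using \<open>h \<in> sq_hinge_cone\<close>
proof (induction k arbitrary: h)
  case 0
  interpret prob_space M by fact
  have "(\<integral>\<^sup>+\<omega>. h (S 0 \<omega>) \<partial>M) \<le> (\<integral>\<^sup>+\<omega>. h 0 \<partial>M)"
    using start by (intro nn_integral_mono_AE) (auto elim!: eventually_mono intro: ennreal_leI sq_hinge_cone_mono[OF 0])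
  then show ?case by (simp add: emeasure_space_1)
next
  case (Suc k)
  have sub: "subalgebra M (H k)" and [measurable]: "S k \<in> borel_measurable (H k)"
    and int: "integrable M (S k)" "integrable M (S (Suc k))"
    using super unfolding supermartingale_def filtration_def by auto
  have "(\<integral>\<^sup>+\<omega>. h (S (Suc k) \<omega>) \<partial>M) = (\<integral>\<^sup>+\<omega>. h (S k \<omega> + (S (Suc k) \<omega> - S k \<omega>)) \<partial>M)"
    by simp
  also have "\<dots> \<le> (\<integral>\<^sup>+\<omega>. two_point_mean (d (Suc k)) (v (Suc k)) h (S k \<omega>) \<partial>M)"
    using incr_le[of "Suc k"] incr_var[of "Suc k"] pos[of "Suc k"] int Suc.prems
      supermartingale_cond_exp_increment_nonpos[OF \<open>prob_space M\<close> super, of k]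
    by (intro sq_hinge_cone_step[OF \<open>prob_space M\<close> sub]) auto
  also have "\<dots> \<le> two_point_mean_iter d v (Suc k) h 0"
    using pos[of "Suc k"] Suc.prems by (simp add: Suc.IH two_point_mean_sq_hinge_cone)
  finally show ?case .
qed

lemma (in prob_space) nn_integral_two_point:
  fixes V :: "'a \<Rightarrow> real" and g :: "real \<Rightarrow> ennreal"
  assumes [measurable]: "V \<in> borel_measurable M" and "a \<noteq> b"
    and "prob {\<omega> \<in> space M. V \<omega> = a} = p" "prob {\<omega> \<in> space M. V \<omega> = b} = q" "p + q = 1"
  shows "(\<integral>\<^sup>+\<omega>. g (V \<omega>) \<partial>M) = p * g a + q * g b"
proof -
  define A where "A = {\<omega> \<in> space M. V \<omega> = a}"
  define B where "B = {\<omega> \<in> space M. V \<omega> = b}"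
  have [measurable]: "A \<in> sets M" "B \<in> sets M" unfolding A_def B_def by measurable
  have "A \<inter> B = {}" unfolding A_def B_def using \<open>a \<noteq> b\<close> by auto
  then have "prob (A \<union> B) = 1" using assms(3-5) finite_measure_Union unfolding A_def B_def by simp
  then have "AE \<omega> in M. \<omega> \<in> A \<union> B" by (rule AE_prob_1)
  then have "(\<integral>\<^sup>+\<omega>. g (V \<omega>) \<partial>M) = (\<integral>\<^sup>+\<omega>. g a * indicator A \<omega> + g b * indicator B \<omega> \<partial>M)"
    using \<open>a \<noteq> b\<close> by (intro nn_integral_cong_AE) (auto elim!: eventually_mono simp: A_def B_def split: split_indicator)
  also have "\<dots> = p * g a + q * g b"
    using assms(3-4) unfolding A_def[symmetric] B_def[symmetric]
    by (simp add: nn_integral_add nn_integral_cmult_indicator emeasure_eq_measure mult.commute)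
  finally show ?thesis .
qed

lemma (in prob_space) nn_integral_two_point_law:
  fixes V :: "'a \<Rightarrow> real"
  assumes [measurable]: "V \<in> borel_measurable M" and "0 < d" "0 \<le> v"
    and "prob {\<omega> \<in> space M. V \<omega> = d} = v / (d\<^sup>2 + v)"
    and "prob {\<omega> \<in> space M. V \<omega> = - v / d} = d\<^sup>2 / (d\<^sup>2 + v)"
    and "\<And>x. 0 \<le> h x"
  shows "(\<integral>\<^sup>+\<omega>. h (y + V \<omega>) \<partial>M) = two_point_mean d v h y"
proof -
  let ?p = "v / (d\<^sup>2 + v)" and ?q = "d\<^sup>2 / (d\<^sup>2 + v)"
  have "d \<noteq> - v / d"
    using assms(2,3) divide_nonneg_pos[of v d] by linarith
  moreover have "d\<^sup>2 + v > 0"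
    using assms(2,3) by (intro add_pos_nonneg) auto
  then have "?p + ?q = 1"
    by (simp flip: add_divide_distrib)
  ultimately have "(\<integral>\<^sup>+\<omega>. h (y + V \<omega>) \<partial>M) = ?p * ennreal (h (y + d)) + ?q * ennreal (h (y + - v / d))"
    using assms(4,5) by (intro nn_integral_two_point[where g = "\<lambda>z. ennreal (h (y + z))"]) auto
  also have "\<dots> = ennreal (?p * h (y + d) + ?q * h (y - v / d))"
    using assms(2,3,6)
    by (simp only: ennreal_mult[symmetric] ennreal_plus[symmetric] mult_nonneg_nonneg
        divide_nonneg_nonneg zero_le_power2 add_nonneg_nonneg less_imp_le
        diff_conv_add_uminus minus_divide_left)
  finally show ?thesis
    unfolding two_point_mean_def .
qed

lemma (in prob_space) nn_integral_indep_var: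
  assumes "indep_var S U T V" and [measurable]: "case_prod f \<in> borel_measurable (S \<Otimes>\<^sub>M T)"
  shows "(\<integral>\<^sup>+\<omega>. f (U \<omega>) (V \<omega>) \<partial>M) = (\<integral>\<^sup>+\<omega>. (\<integral>\<^sup>+\<omega>'. f (U \<omega>') (V \<omega>) \<partial>M) \<partial>M)"
proof -
  have [measurable]: "U \<in> measurable M S" "V \<in> measurable M T"
    and distr: "distr M S U \<Otimes>\<^sub>M distr M T V = distr M (S \<Otimes>\<^sub>M T) (\<lambda>\<omega>. (U \<omega>, V \<omega>))"
    using assms(1) unfolding indep_var_distribution_eq by auto
  interpret pair_sigma_finite "distr M S U" "distr M T V"
    by (simp add: pair_sigma_finite_def prob_space_distr prob_space_imp_sigma_finite)
  have "sets (distr M S U \<Otimes>\<^sub>M distr M T V) = sets (S \<Otimes>\<^sub>M T)"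
    by (intro sets_pair_measure_cong) simp_all
  then have f_pair: "case_prod f \<in> borel_measurable (distr M S U \<Otimes>\<^sub>M distr M T V)"
    by (simp cong: measurable_cong_sets)
  have "(\<integral>\<^sup>+\<omega>. f (U \<omega>) (V \<omega>) \<partial>M) = (\<integral>\<^sup>+p. case_prod f p \<partial>distr M (S \<Otimes>\<^sub>M T) (\<lambda>\<omega>. (U \<omega>, V \<omega>)))"
    by (simp add: nn_integral_distr)
  also have "\<dots> = (\<integral>\<^sup>+t. (\<integral>\<^sup>+u. f u t \<partial>distr M S U) \<partial>distr M T V)"
    unfolding distr[symmetric] using nn_integral_snd[OF f_pair] by simp
  also have "\<dots> = (\<integral>\<^sup>+t. (\<integral>\<^sup>+\<omega>'. f (U \<omega>') t \<partial>M) \<partial>distr M T V)"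
    by (intro nn_integral_cong nn_integral_distr) measurable
  also have "\<dots> = (\<integral>\<^sup>+\<omega>. (\<integral>\<^sup>+\<omega>'. f (U \<omega>') (V \<omega>) \<partial>M) \<partial>M)"
    by (rule nn_integral_distr) measurable
  finally show ?thesis .
qed

lemma (in prob_space) nn_integral_two_point_sum:
  fixes Z :: "nat \<Rightarrow> 'a \<Rightarrow> real" and d v :: "nat \<Rightarrow> real"
  assumes indep: "indep_vars (\<lambda>_. borel) Z {1..n}"
    and pos: "\<And>i. i \<in> {1..n} \<Longrightarrow> 0 < d i \<and> 0 \<le> v i"
    and law: "\<And>i. i \<in> {1..n} \<Longrightarrow> prob {\<omega> \<in> space M. Z i \<omega> = d i} = v i / ((d i)\<^sup>2 + v i)
                  \<and> prob {\<omega> \<in> space M. Z i \<omega> = - v i / d i} = (d i)\<^sup>2 / ((d i)\<^sup>2 + v i)"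
    and "k \<le> n" and [measurable]: "h \<in> borel_measurable borel" and h_nonneg: "\<And>x. 0 \<le> h x"
  shows "(\<integral>\<^sup>+\<omega>. h (x + (\<Sum>i = 1..k. Z i \<omega>)) \<partial>M) = two_point_mean_iter d v k h x"
  using \<open>k \<le> n\<close> \<open>h \<in> borel_measurable borel\<close> h_nonneg
proof (induction k arbitrary: h x)
  case 0
  then show ?case by (simp add: emeasure_space_1)
next
  case (Suc k)
  note [measurable] = Suc.prems(2)
  have [measurable]: "Z i \<in> borel_measurable M" if "i \<in> {1..n}" for i
    using indep that unfolding indep_vars_def by auto
  have k: "Suc k \<in> {1..n}" using Suc.prems(1) by simp
  then have [measurable]: "Z (Suc k) \<in> borel_measurable M" by measurable
  let ?T = "\<lambda>\<omega>. \<Sum>i = 1..k. Z i \<omega>"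
  have [measurable]: "?T \<in> borel_measurable M"
    using Suc.prems(1) by (intro borel_measurable_sum) auto
  have "indep_var borel (Z (Suc k)) borel ?T"
    using Suc.prems(1) by (intro indep_vars_sum indep_vars_subset[OF indep]) auto
  then have "(\<integral>\<^sup>+\<omega>. h (x + ?T \<omega> + Z (Suc k) \<omega>) \<partial>M)
      = (\<integral>\<^sup>+\<omega>. (\<integral>\<^sup>+\<omega>'. h (x + ?T \<omega> + Z (Suc k) \<omega>') \<partial>M) \<partial>M)"
    by (rule nn_integral_indep_var[where f = "\<lambda>z t. ennreal (h (x + t + z))"]) measurable
  also have "\<dots> = (\<integral>\<^sup>+\<omega>. two_point_mean (d (Suc k)) (v (Suc k)) h (x + ?T \<omega>) \<partial>M)"
    using law[OF k] pos[OF k] Suc.prems(3)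
    by (intro nn_integral_cong nn_integral_two_point_law) auto
  also have "\<dots> = two_point_mean_iter d v (Suc k) h x"
    using Suc.IH[of "two_point_mean (d (Suc k)) (v (Suc k)) h" x] Suc.prems pos[OF k]
    by (simp add: two_point_mean_nonneg two_point_mean_measurable)
  finally show ?case by (simp add: add.assoc)
qed

lemma F2plus_measure_sigma_finite:
  fixes \<mu> :: "real measure" and f :: "real \<Rightarrow> real"
  assumes "sets \<mu> = sets borel" and f: "\<And>u. ennreal (f u) = (\<integral>\<^sup>+t. (max 0 (u - t))\<^sup>2 \<partial>\<mu>)"
  shows "sigma_finite_measure \<mu>"
proof
  have "indicator {..real k} t \<le> ennreal ((max 0 (real k + 1 - t))\<^sup>2)" for k :: nat and t
    by (cases "t \<le> real k") (simp_all add: one_le_power)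
  then have "(\<integral>\<^sup>+t. indicator {..real k} t \<partial>\<mu>) \<le> f (real k + 1)" for k :: nat
    unfolding f by (intro nn_integral_mono) blast
  then have "emeasure \<mu> {..real k} \<le> ennreal (f (real k + 1))" for k :: nat
    using assms(1) by simp
  then have "emeasure \<mu> {..real k} \<noteq> \<infinity>" for k :: nat
    by (metis ennreal_less_top infinity_ennreal_def le_less_trans less_irrefl)
  moreover have "(\<Union>k. {..real k}) = space \<mu>"
    using sets_eq_imp_space_eq[OF assms(1)] real_arch_simple by auto
  ultimately show "\<exists>A. countable A \<and> A \<subseteq> sets \<mu> \<and> \<Union> A = space \<mu> \<and> (\<forall>a\<in>A. emeasure \<mu> a \<noteq> \<infinity>)"
    using assms(1) by (intro exI[of _ "range (\<lambda>k::nat. {..real k})"]) auto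
qed

lemma F2plus_nn_integral_eq:
  fixes \<mu> :: "real measure" and f :: "real \<Rightarrow> real" and W :: "'a \<Rightarrow> real"
  assumes "sets \<mu> = sets borel" and f: "\<And>u. ennreal (f u) = (\<integral>\<^sup>+t. (max 0 (u - t))\<^sup>2 \<partial>\<mu>)"
    and "sigma_finite_measure N" and [measurable]: "W \<in> borel_measurable N"
  shows "(\<integral>\<^sup>+x. f (W x) \<partial>N) = (\<integral>\<^sup>+t. (\<integral>\<^sup>+x. (max 0 (W x - t))\<^sup>2 \<partial>N) \<partial>\<mu>)"
proof -
  interpret pair_sigma_finite N \<mu>
    using assms(3) F2plus_measure_sigma_finite[OF assms(1) f] by (simp add: pair_sigma_finite_def)
  have "sets (N \<Otimes>\<^sub>M \<mu>) = sets (N \<Otimes>\<^sub>M borel)"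
    using assms(1) by (intro sets_pair_measure_cong) simp_all
  moreover have "(\<lambda>(x, t). ennreal ((max 0 (W x - t))\<^sup>2)) \<in> borel_measurable (N \<Otimes>\<^sub>M borel)"
    by measurable
  ultimately have "(\<lambda>(x, t). ennreal ((max 0 (W x - t))\<^sup>2)) \<in> borel_measurable (N \<Otimes>\<^sub>M \<mu>)"
    by (simp cong: measurable_cong_sets)
  from Fubini'[OF this] show ?thesis
    unfolding f by simp
qed

lemma F2plus_nn_integral_mono:
  fixes X :: "'a \<Rightarrow> real" and Y :: "'b \<Rightarrow> real"
  assumes "f \<in> F2plus" "sigma_finite_measure M" "sigma_finite_measure N"
    and "X \<in> borel_measurable M" "Y \<in> borel_measurable N"
    and hinge: "\<And>t. (\<integral>\<^sup>+\<omega>. (max 0 (X \<omega> - t))\<^sup>2 \<partial>M) \<le> (\<integral>\<^sup>+x. (max 0 (Y x - t))\<^sup>2 \<partial>N)"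
  shows "(\<integral>\<^sup>+\<omega>. f (X \<omega>) \<partial>M) \<le> (\<integral>\<^sup>+x. f (Y x) \<partial>N)"
proof -
  obtain \<mu> :: "real measure" where \<mu>: "sets \<mu> = sets borel"
    and f: "\<And>u. ennreal (f u) = (\<integral>\<^sup>+t. (max 0 (u - t))\<^sup>2 \<partial>\<mu>)"
    using \<open>f \<in> F2plus\<close> unfolding F2plus_def by blast
  show ?thesis
    unfolding F2plus_nn_integral_eq[OF \<mu> f assms(2,4)] F2plus_nn_integral_eq[OF \<mu> f assms(3,5)]
    using hinge by (intro nn_integral_mono)
qed

theorem theorem2p1:
  fixes M :: "'a measure" and H :: "nat \<Rightarrow> 'a measure" and S :: "nat \<Rightarrow> 'a \<Rightarrow> real"
    and d \<sigma> :: "nat \<Rightarrow> real"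
  assumes "prob_space M"
    and "supermartingale M H S"
    and "AE \<omega> in M. S 0 \<omega> \<le> 0"
    and "\<And>i. i \<ge> 1 \<Longrightarrow> d i > 0 \<and> \<sigma> i > 0"
    and "\<And>i. i \<ge> 1 \<Longrightarrow> AE \<omega> in M. S i \<omega> - S (i - 1) \<omega> \<le> d i"
    and "\<And>i. i \<ge> 1 \<Longrightarrow> AE \<omega> in M.
            cond_var M (H (i - 1)) (\<lambda>\<omega>. S i \<omega> - S (i - 1) \<omega>) \<omega> \<le> ennreal ((\<sigma> i)\<^sup>2)"
  shows "\<forall>n \<ge> 1. \<forall>f \<in> F2plus. \<forall>(N :: 'b measure) (Z :: nat \<Rightarrow> 'b \<Rightarrow> real).
           prob_space N \<and>
           prob_space.indep_vars N (\<lambda>_. borel) Z {1..n} \<and>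
           (\<forall>i \<in> {1..n}. measure N {x \<in> space N. Z i x = d i} = (\<sigma> i)\<^sup>2 / ((d i)\<^sup>2 + (\<sigma> i)\<^sup>2) \<and>
                         measure N {x \<in> space N. Z i x = - (\<sigma> i)\<^sup>2 / d i} = (d i)\<^sup>2 / ((d i)\<^sup>2 + (\<sigma> i)\<^sup>2))
           \<longrightarrow> (\<integral>\<^sup>+ \<omega>. ennreal (f (S n \<omega>)) \<partial>M) \<le> (\<integral>\<^sup>+ x. ennreal (f (\<Sum>i = 1..n. Z i x)) \<partial>N)"
proof (intro allI impI ballI, elim conjE)
  fix n f and N :: "'b measure" and Z :: "nat \<Rightarrow> 'b \<Rightarrow> real"
  assume "f \<in> F2plus" "prob_space N" and indep: "prob_space.indep_vars N (\<lambda>_. borel) Z {1..n}"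
    and law: "\<forall>i \<in> {1..n}. measure N {x \<in> space N. Z i x = d i} = (\<sigma> i)\<^sup>2 / ((d i)\<^sup>2 + (\<sigma> i)\<^sup>2) \<and>
      measure N {x \<in> space N. Z i x = - (\<sigma> i)\<^sup>2 / d i} = (d i)\<^sup>2 / ((d i)\<^sup>2 + (\<sigma> i)\<^sup>2)"
  interpret M: prob_space M by fact
  interpret N: prob_space N by fact
  have pos: "\<And>i. i \<ge> 1 \<Longrightarrow> d i > 0 \<and> (\<sigma> i)\<^sup>2 > 0"
    using assms(4) by (metis zero_less_power)
  have "(\<lambda>x. \<Sum>i = 1..n. Z i x) \<in> borel_measurable N"
    using indep unfolding N.indep_vars_def by (intro borel_measurable_sum) auto
  moreover have "(\<integral>\<^sup>+\<omega>. (max 0 (S n \<omega> - t))\<^sup>2 \<partial>M) \<le> (\<integral>\<^sup>+x. (max 0 ((\<Sum>i = 1..n. Z i x) - t))\<^sup>2 \<partial>N)"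
    for t
  proof -
    have "(\<integral>\<^sup>+\<omega>. (max 0 (S n \<omega> - t))\<^sup>2 \<partial>M)
        \<le> two_point_mean_iter d (\<lambda>i. (\<sigma> i)\<^sup>2) n (\<lambda>x. (max 0 (x - t))\<^sup>2) 0"
      using supermartingale_sq_hinge_cone_le[OF assms(1-3) pos assms(5,6) sq_hinge_in_cone] .
    also have "\<dots> = (\<integral>\<^sup>+x. (max 0 (0 + (\<Sum>i = 1..n. Z i x) - t))\<^sup>2 \<partial>N)"
      using pos law by (intro N.nn_integral_two_point_sum[OF indep, symmetric]) auto
    finally show ?thesis by simp
  qed
  ultimately show "(\<integral>\<^sup>+\<omega>. f (S n \<omega>) \<partial>M) \<le> (\<integral>\<^sup>+x. f (\<Sum>i = 1..n. Z i x) \<partial>N)"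
    by (rule F2plus_nn_integral_mono[OF \<open>f \<in> F2plus\<close> M.sigma_finite_measure_axioms
          N.sigma_finite_measure_axioms supermartingale_measurable[OF assms(2)]])
qed

end
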